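(* Let $I\subseteq\mathbb{R}$ be an open interval (possibly unbounded), $\Sigma=I\times\mathbb{R}$, and let $h\ge1$, $L\ge1$ be integers. Let $F\in C^\omega(\Sigma,\mathbb{R}^2)$ be a non-singular map of the form $F(x,y)=\Big(\sum_{l=1}^L p_{2hl}(x)y^{2hl}+p_1(x)y+p_0(x),\;q_{2h}(x)y^{2h}+q_0(x)\Big)$. If $p_1(x)\neq0$ for all $x\in I$, then $F$ is injective.
   Context: For $F=(P,Q)$, $d_F=P_xQ_y-P_yQ_x$ is the Jacobian determinant; $F$ is non-singular if $d_F(x,y)\neq0$ for all $(x,y)\in\Sigma$. $C^\omega$ denotes real analytic. *)

theory Defs
  imports "HOL-Analysis.Analysis"
begin

text \<open>Real analyticity of a real-valued function of two real variables on a set S: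
  near every point of S it is the (unconditionally, i.e. absolutely, convergent)
  sum of a double power series.\<close>
definition real_analytic2_on :: "(real \<times> real \<Rightarrow> real) \<Rightarrow> (real \<times> real) set \<Rightarrow> bool" where
  "real_analytic2_on f S \<longleftrightarrow>
     (\<forall>(a, b) \<in> S. \<exists>r > 0. \<exists>c :: nat \<Rightarrow> nat \<Rightarrow> real.
        \<forall>x y. dist (x, y) (a, b) < r \<longrightarrow>
          ((\<lambda>(i, j). c i j * (x - a) ^ i * (y - b) ^ j) has_sum f (x, y)) UNIV)"

definition real_analytic_map_on :: "(real \<times> real \<Rightarrow> real \<times> real) \<Rightarrow> (real \<times> real) set \<Rightarrow> bool" where
  "real_analytic_map_on F S \<longleftrightarrow>
     real_analytic2_on (\<lambda>z. fst (F z)) S \<and> real_analytic2_on (\<lambda>z. snd (F z)) S"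

definition jac_det :: "(real \<times> real \<Rightarrow> real \<times> real) \<Rightarrow> real \<Rightarrow> real \<Rightarrow> real" where
  "jac_det F x y =
     deriv (\<lambda>s. fst (F (s, y))) x * deriv (\<lambda>t. snd (F (x, t))) y
   - deriv (\<lambda>t. fst (F (x, t))) y * deriv (\<lambda>s. snd (F (s, y))) x"

end

theory Submission
  imports Defs "HOL-Computational_Algebra.Polynomial"
begin

text \<open>
  Write s = a(x) y with a = p_1 and m = 2h. Then Q(x, y) = lead(x) s^m + e(x) is an affine
  function QT x T of T = s^m, and P(x, -y) = P(x, y) - 2s. The Jacobians at (x, y) and (x, -y)
  add up to -2 a(x) times the x-derivative of QT at T = s^m; as the Jacobian has constant sign,
  QT x T is strictly monotone in x for every T \<ge> 0 (after normalising the sign of q_0').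
  So between two points with equal Q and s of equal sign the level set of Q is a graph over
  the x-axis, and the mean value theorem along it, with the sign of the Jacobian, shows that P
  increases strictly with s. The reflection y \<mapsto> -y fixes Q and lowers P by 2s, which extends
  this to points with s of opposite signs. Hence F(x1, y1) = F(x2, y2) forces s1 = s2, then
  x1 = x2 by monotonicity of QT, and y1 = y2.
\<close>

lemma has_real_derivative_compose_pair:
  assumes "((\<lambda>z. f (fst z) (snd z)) has_derivative (\<lambda>d. A * fst d + B * snd d)) (at (u t, v t))"
    and "(u has_real_derivative u') (at t)" and "(v has_real_derivative v') (at t)"
  shows "((\<lambda>s. f (u s) (v s)) has_real_derivative A * u' + B * v') (at t)"
proof -
  have "((\<lambda>s. (u s, v s)) has_derivative (\<lambda>d. (d * u', d * v'))) (at t)"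
    using assms(2,3)
    by (intro has_derivative_Pair) (simp_all add: has_field_derivative_def mult_commute_abs)
  from has_derivative_compose[OF this assms(1)]
  have "((\<lambda>s. f (u s) (v s)) has_derivative (\<lambda>d. A * (d * u') + B * (d * v'))) (at t)"
    by simp
  then show ?thesis
    unfolding has_field_derivative_def
    by (rule has_derivative_eq_rhs) (simp add: fun_eq_iff algebra_simps)
qed

lemma continuous_nonzero_imp_same_sign:
  fixes f :: "real \<Rightarrow> real"
  assumes "continuous_on UNIV f" and "\<And>t. f t \<noteq> 0"
  shows "0 < f s * f t"
proof (rule ccontr)
  assume "\<not> 0 < f s * f t"
  then have "0 \<in> closed_segment (f s) (f t)"
    using assms(2)[of s] assms(2)[of t] unfolding closed_segment_eq_real_ivl
    by (auto simp: not_less mult_le_0_iff)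
  then obtain u where "f u = 0"
    using IVT'_closed_segment_real[of 0 f s t] continuous_on_subset[OF assms(1)] by blast
  with assms(2) show False by blast
qed

lemma interval_segment_subset:
  fixes I :: "real set"
  assumes "is_interval I" and "x1 \<in> I" and "x2 \<in> I"
  shows "{x1..x2} \<subseteq> I"
  using mem_is_interval_1_I[OF assms] by auto

lemma DERIV_nonzero_imp_inj_on:
  fixes g :: "real \<Rightarrow> real"
  assumes "is_interval I"
    and g: "\<And>x. x \<in> I \<Longrightarrow> (g has_real_derivative g' x) (at x)"
    and nonzero: "\<And>x. x \<in> I \<Longrightarrow> g' x \<noteq> 0"
  shows "inj_on g I"
proof (rule linorder_inj_onI)
  fix x1 x2 assume "x1 < x2" "x1 \<in> I" "x2 \<in> I"
  then have sub: "{x1..x2} \<subseteq> I"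
    using interval_segment_subset[OF assms(1)] by blast
  have "continuous_on I g"
    using g by (intro continuous_at_imp_continuous_on ballI DERIV_isCont) blast
  then have cont: "continuous_on {x1..x2} g"
    using sub by (rule continuous_on_subset)
  have diff: "g differentiable (at x)" if "x1 < x" "x < x2" for x
  proof -
    have "x \<in> I" using sub that by auto
    then show ?thesis using g real_differentiable_def by blast
  qed
  show "g x1 \<noteq> g x2"
  proof
    assume "g x1 = g x2"
    then obtain z where z: "x1 < z" "z < x2" "(g has_real_derivative 0) (at z)"
      using Rolle[OF \<open>x1 < x2\<close> _ cont diff] by blast
    then have "z \<in> I" using sub by auto
    then show False using DERIV_unique[OF g z(3)] nonzero by simp
  qed
qed auto

lemma DERIV_nonzero_imp_constant_sign:
  fixes g :: "real \<Rightarrow> real"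
  assumes I: "open I" "is_interval I"
    and g: "\<And>x. x \<in> I \<Longrightarrow> (g has_real_derivative g' x) (at x)"
    and nonzero: "\<And>x. x \<in> I \<Longrightarrow> g' x \<noteq> 0"
  shows "(\<forall>x\<in>I. 0 < g' x) \<or> (\<forall>x\<in>I. g' x < 0)"
proof -
  have "continuous_on I g"
    using g by (intro continuous_at_imp_continuous_on ballI DERIV_isCont) blast
  then have "strict_mono_on I g \<or> strict_antimono_on I g"
    using injective_eq_monotone_map[OF I(2)] DERIV_nonzero_imp_inj_on[OF I(2) g nonzero]
    by simp
  then show ?thesis
  proof
    assume "strict_mono_on I g"
    then have "0 \<le> g' x" if "x \<in> I" for x
      using mono_on_imp_deriv_nonneg[OF strict_mono_on_imp_mono_on g[OF that]] that I(1)
      by (simp add: interior_open)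
    then show ?thesis using nonzero by (simp add: order_le_less)
  next
    assume "strict_antimono_on I g"
    then have "mono_on I (\<lambda>x. - g x)"
      by (simp add: monotone_on_def less_eq_real_def)
    then have "0 \<le> - g' x" if "x \<in> I" for x
      using mono_on_imp_deriv_nonneg[OF _ DERIV_minus[OF g[OF that]]] that I(1)
      by (simp add: interior_open)
    then show ?thesis using nonzero by (metis neg_0_le_iff_le order_le_less)
  qed
qed

lemma power_diff_mult_diff_pos:
  fixes u v :: real
  assumes "0 \<le> u" "0 \<le> v" "u \<noteq> v" "0 < m"
  shows "0 < (v ^ m - u ^ m) * (v - u)"
proof (cases "u < v")
  case True
  then show ?thesis using power_strict_mono[OF True assms(1,4)] by simp
next
  case False
  then have "v < u" using assms(3) by simp
  then show ?thesis using power_strict_mono[OF \<open>v < u\<close> assms(2,4)] by (simp add: mult_neg_neg)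
qed

lemma common_sign:
  fixes s1 s2 :: real
  assumes "0 \<le> s1 * s2"
  obtains \<epsilon> :: real where "\<epsilon> = 1 \<or> \<epsilon> = -1" and "0 \<le> \<epsilon> * s1" and "0 \<le> \<epsilon> * s2"
proof (cases "0 \<le> s1 + s2")
  case True
  with assms have "0 \<le> s1" "0 \<le> s2" by (auto simp: zero_le_mult_iff)
  then show ?thesis using that[of 1] by simp
next
  case False
  with assms have "s1 \<le> 0" "s2 \<le> 0" by (auto simp: zero_le_mult_iff)
  then show ?thesis using that[of "-1"] by simp
qed

text \<open>
  The map (P, Q) with Q x y = c x * y ^ m + e x and P odd in y only through the term a x * y.
  In the theorem m = 2h, a = p_1, c = q_(2h) and e = q_0.
\<close>

locale power_form_map =
  fixes I :: "real set" and m :: nat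
    and P PX PY :: "real \<Rightarrow> real \<Rightarrow> real"
    and a c c' e e' :: "real \<Rightarrow> real"
  assumes interval: "is_interval I"
    and m_even: "even m" and m_pos: "0 < m"
    and P_has_derivative: "\<And>x y. x \<in> I \<Longrightarrow>
      ((\<lambda>z. P (fst z) (snd z)) has_derivative (\<lambda>d. PX x y * fst d + PY x y * snd d)) (at (x, y))"
    and PX_continuous: "\<And>x. x \<in> I \<Longrightarrow> continuous_on UNIV (PX x)"
    and PY_continuous: "\<And>x. x \<in> I \<Longrightarrow> continuous_on UNIV (PY x)"
    and P_reflect: "\<And>x y. P x (- y) = P x y - 2 * a x * y"
    and a_nonzero: "\<And>x. x \<in> I \<Longrightarrow> a x \<noteq> 0"
    and c_deriv: "\<And>x. x \<in> I \<Longrightarrow> (c has_real_derivative c' x) (at x)"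
    and e_deriv: "\<And>x. x \<in> I \<Longrightarrow> (e has_real_derivative e' x) (at x)"
    and jacobian_nonzero: "\<And>x y. x \<in> I \<Longrightarrow>
      PX x y * (c x * (real m * y ^ (m - 1))) - PY x y * (c' x * y ^ m + e' x) \<noteq> 0"
begin

definition Q :: "real \<Rightarrow> real \<Rightarrow> real" where "Q x y = c x * y ^ m + e x"
definition QX :: "real \<Rightarrow> real \<Rightarrow> real" where "QX x y = c' x * y ^ m + e' x"
definition QY :: "real \<Rightarrow> real \<Rightarrow> real" where "QY x y = c x * (real m * y ^ (m - 1))"
definition jac :: "real \<Rightarrow> real \<Rightarrow> real" where "jac x y = PX x y * QY x y - PY x y * QX x y"

\<comment> \<open>By P_reflect, a x = (P x 1 - P x (-1)) / 2, so this is the derivative of a.\<close>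
definition a' :: "real \<Rightarrow> real" where "a' x = (PX x 1 - PX x (- 1)) / 2"

definition lead :: "real \<Rightarrow> real" where "lead x = c x / a x ^ m"
definition QT :: "real \<Rightarrow> real \<Rightarrow> real" where "QT x T = lead x * T + e x"
definition QT_dx :: "real \<Rightarrow> real \<Rightarrow> real" where
  "QT_dx x T = (c' x * a x - real m * c x * a' x) / a x ^ (m + 1) * T + e' x"

text \<open>
  Where lead x \<noteq> 0, the level set Q = b meets the vertical line through x in the points with
  (a x * y) ^ m = level_T b x; level_curve \<epsilon> b x is the one with a x * y of sign \<epsilon>.
\<close>

definition level_T :: "real \<Rightarrow> real \<Rightarrow> real" where "level_T b x = (b - e x) / lead x"
definition level_curve :: "real \<Rightarrow> real \<Rightarrow> real \<Rightarrow> real" where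
  "level_curve \<epsilon> b x = \<epsilon> * root m (level_T b x) / a x"

lemma jac_nonzero: "x \<in> I \<Longrightarrow> jac x y \<noteq> 0"
  using jacobian_nonzero by (simp add: jac_def QX_def QY_def)

lemma Q_reflect: "Q x (- y) = Q x y"
  using m_even by (simp add: Q_def)

lemma P_chain:
  assumes "x \<in> I" and "(f has_real_derivative f') (at x)"
  shows "((\<lambda>t. P t (f t)) has_real_derivative PX x (f x) + PY x (f x) * f') (at x)"
  using has_real_derivative_compose_pair[of P "PX x (f x)" "PY x (f x)" "\<lambda>t. t" x f 1 f']
    P_has_derivative[OF assms(1)] assms(2) by simp

lemma P_chain_snd:
  assumes "x \<in> I" and "(f has_real_derivative f') (at t)"
  shows "((\<lambda>s. P x (f s)) has_real_derivative PY x (f t) * f') (at t)"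
  using has_real_derivative_compose_pair[of P "PX x (f t)" "PY x (f t)" "\<lambda>_. x" t f 0 f']
    P_has_derivative[OF assms(1)] assms(2) by simp

lemma P_deriv_x: "x \<in> I \<Longrightarrow> ((\<lambda>s. P s y) has_real_derivative PX x y) (at x)"
  using P_chain[of x "\<lambda>_. y" 0] by simp

lemma P_deriv_y: "x \<in> I \<Longrightarrow> (P x has_real_derivative PY x y) (at y)"
  using P_chain_snd[of x "\<lambda>t. t" 1 y] by simp

lemma P_continuous_on: "continuous_on (I \<times> UNIV) (\<lambda>z. P (fst z) (snd z))"
  by (intro continuous_at_imp_continuous_on ballI)
    (auto intro: has_derivative_continuous P_has_derivative)

lemma Q_chain:
  assumes "x \<in> I" and "(f has_real_derivative f') (at x)"
  shows "((\<lambda>t. Q t (f t)) has_real_derivative QX x (f x) + QY x (f x) * f') (at x)"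
  unfolding Q_def[abs_def] QX_def QY_def
  using assms by (auto intro!: derivative_eq_intros c_deriv e_deriv simp: algebra_simps)

lemma a_deriv:
  assumes "x \<in> I"
  shows "(a has_real_derivative a' x) (at x)"
proof -
  have "a = (\<lambda>s. (P s 1 - P s (- 1)) / 2)"
    using P_reflect[of _ 1] by (simp add: fun_eq_iff)
  then show ?thesis
    unfolding a'_def by (auto intro!: derivative_eq_intros P_deriv_x assms)
qed

lemma PX_reflect:
  assumes "x \<in> I"
  shows "PX x (- y) = PX x y - 2 * a' x * y"
proof -
  have "((\<lambda>s. P s y - 2 * a s * y) has_real_derivative PX x y - 2 * a' x * y) (at x)"
    by (auto intro!: derivative_eq_intros P_deriv_x a_deriv assms)
  moreover have "(\<lambda>s. P s y - 2 * a s * y) = (\<lambda>s. P s (- y))"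
    by (simp add: fun_eq_iff P_reflect)
  ultimately show ?thesis
    using DERIV_unique P_deriv_x[OF assms, of "- y"] by metis
qed

lemma PY_reflect:
  assumes "x \<in> I"
  shows "PY x (- y) = 2 * a x - PY x y"
proof -
  have "((\<lambda>t. P x t - 2 * a x * t) has_real_derivative PY x y - 2 * a x) (at y)"
    by (auto intro!: derivative_eq_intros P_deriv_y assms)
  moreover have "(\<lambda>t. P x t - 2 * a x * t) = (\<lambda>t. P x (- t))"
    by (simp add: fun_eq_iff P_reflect)
  moreover have "((\<lambda>t. P x (- t)) has_real_derivative PY x (- y) * (- 1)) (at y)"
    using P_chain_snd[OF assms, of uminus "- 1" y] by (simp add: DERIV_minus)
  ultimately show ?thesis
    using DERIV_unique by fastforce
qed

lemma jac_at_zero: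
  assumes "x \<in> I"
  shows "jac x 0 = - a x * e' x"
proof -
  have "2 \<le> m" using m_even m_pos by presburger
  then show ?thesis
    using PY_reflect[OF assms, of 0] by (simp add: jac_def QX_def QY_def power_0_left)
qed

lemma e'_nonzero: "x \<in> I \<Longrightarrow> e' x \<noteq> 0"
  using jac_nonzero[of x 0] by (simp add: jac_at_zero)

lemma Q_eq_QT: "x \<in> I \<Longrightarrow> Q x y = QT x ((a x * y) ^ m)"
  using a_nonzero[of x] by (simp add: Q_def QT_def lead_def power_mult_distrib)

lemma QT_deriv:
  assumes x: "x \<in> I"
  shows "((\<lambda>s. QT s T) has_real_derivative QT_dx x T) (at x)"
proof -
  obtain n where n: "m = Suc n" using m_pos by (cases m) auto
  have "((\<lambda>s. c s / a s ^ m) has_real_derivative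
      (c' x * a x ^ m - c x * (real m * (a' x * a x ^ (m - Suc 0)))) / (a x ^ m * a x ^ m)) (at x)"
    using DERIV_divide[OF c_deriv[OF x] DERIV_power[OF a_deriv[OF x], of m]] a_nonzero[OF x]
    by simp
  also have "(c' x * a x ^ m - c x * (real m * (a' x * a x ^ (m - Suc 0)))) / (a x ^ m * a x ^ m)
      = (c' x * a x - real m * c x * a' x) / a x ^ (m + 1)"
    using a_nonzero[OF x] unfolding n by (simp add: field_simps)
  finally have "((\<lambda>s. c s / a s ^ m) has_real_derivative
      (c' x * a x - real m * c x * a' x) / a x ^ (m + 1)) (at x)" .
  then show ?thesis
    unfolding QT_def[abs_def] lead_def QT_dx_def
    by (intro DERIV_add DERIV_cmult_right e_deriv x)
qed

lemma jac_reflect_sum: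
  assumes x: "x \<in> I"
  shows "jac x y + jac x (- y) = - 2 * a x * QT_dx x ((a x * y) ^ m)"
proof -
  obtain n where n: "m = Suc n" using m_pos by (cases m) auto
  have "QY x (- y) = - QY x y" and "QX x (- y) = QX x y"
    using m_even m_pos by (simp_all add: QY_def QX_def)
  then have "jac x y + jac x (- y) = 2 * (a' x * y * QY x y - a x * QX x y)"
    unfolding jac_def PX_reflect[OF x] PY_reflect[OF x] by (simp add: algebra_simps)
  also have "\<dots> = - 2 * a x * QT_dx x ((a x * y) ^ m)"
    unfolding QT_dx_def QY_def QX_def
    using a_nonzero[OF x] unfolding n by (simp add: field_simps power_mult_distrib)
  finally show ?thesis .
qed

lemma QT_level_T: "lead x \<noteq> 0 \<Longrightarrow> QT x (level_T b x) = b"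
  by (simp add: QT_def level_T_def)

lemma level_T_QT: "lead x \<noteq> 0 \<Longrightarrow> level_T (QT x T) x = T"
  by (simp add: QT_def level_T_def)

lemma level_T_differentiable:
  assumes "x \<in> I" and "lead x \<noteq> 0"
  shows "level_T b differentiable (at x)"
proof -
  \<comment> \<open>QT is affine in T, with slope lead and intercept e.\<close>
  have "level_T b = (\<lambda>s. (b - QT s 0) / (QT s 1 - QT s 0))"
    by (simp add: fun_eq_iff level_T_def QT_def)
  moreover have "QT x 1 - QT x 0 \<noteq> 0"
    using assms(2) by (simp add: QT_def)
  moreover have "(\<lambda>s. QT s T) differentiable (at x)" for T
    using QT_deriv[OF assms(1)] real_differentiable_def by blast
  ultimately show ?thesis
    by (auto intro!: derivative_intros)
qed

lemma a_mult_level_curve: "x \<in> I \<Longrightarrow> a x * level_curve \<epsilon> b x = \<epsilon> * root m (level_T b x)"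
  using a_nonzero[of x] by (simp add: level_curve_def)

lemma Q_level_curve:
  assumes "x \<in> I" and "lead x \<noteq> 0" and "0 \<le> level_T b x" and "\<epsilon> ^ m = 1"
  shows "Q x (level_curve \<epsilon> b x) = b"
proof -
  have "(a x * level_curve \<epsilon> b x) ^ m = level_T b x"
    using a_mult_level_curve[OF assms(1)] assms(3,4) m_pos by (simp add: power_mult_distrib)
  then show ?thesis
    using Q_eq_QT[OF assms(1)] QT_level_T[OF assms(2)] by simp
qed

lemma isCont_level_curve:
  assumes "x \<in> I" and "lead x \<noteq> 0"
  shows "isCont (level_curve \<epsilon> b) x"
proof -
  have "isCont (level_T b) x" and "isCont a x"
    using level_T_differentiable[OF assms] a_deriv[OF assms(1)]
    by (auto intro: differentiable_imp_continuous_within DERIV_isCont)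
  then show ?thesis
    unfolding level_curve_def[abs_def] using a_nonzero[OF assms(1)]
    by (auto intro!: continuous_intros isCont_o2[OF _ isCont_real_root])
qed

lemma level_curve_differentiable:
  assumes "x \<in> I" and "lead x \<noteq> 0" and "0 < level_T b x"
  shows "level_curve \<epsilon> b differentiable (at x)"
proof -
  have "root m differentiable (at (level_T b x))"
    using DERIV_real_root[OF m_pos assms(3)] real_differentiable_def by blast
  then have "(\<lambda>s. root m (level_T b s)) differentiable (at x)"
    using differentiable_chain_at[OF level_T_differentiable[OF assms(1,2)]] by (simp add: o_def)
  moreover have "a differentiable (at x)"
    using a_deriv[OF assms(1)] real_differentiable_def by blast
  ultimately show ?thesis
    unfolding level_curve_def[abs_def] using a_nonzero[OF assms(1)]
    by (intro derivative_intros) auto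
qed

lemma level_curve_mvt:
  assumes x: "x1 < x2" "x1 \<in> I" "x2 \<in> I"
    and y_cont: "continuous_on {x1..x2} y"
    and y_diff: "\<And>t. t \<in> {x1<..<x2} \<Longrightarrow> y differentiable (at t)"
    and level: "\<And>t. t \<in> {x1..x2} \<Longrightarrow> Q t (y t) = b"
  obtains t k where "t \<in> {x1<..<x2}" and "P x2 (y x2) - P x1 (y x1) = (x2 - x1) * k"
    and "k * QY t (y t) = jac t (y t)"
proof -
  have sub: "{x1..x2} \<subseteq> I" using interval_segment_subset[OF interval x(2,3)] .
  have y': "(y has_real_derivative deriv y t) (at t)" if "t \<in> {x1<..<x2}" for t
    using y_diff[OF that] DERIV_deriv_iff_real_differentiable by blast
  have "continuous_on {x1..x2} (\<lambda>t. P t (y t))"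
    using continuous_on_compose2[OF P_continuous_on continuous_on_Pair[OF continuous_on_id y_cont]]
      sub by auto
  moreover have "(\<lambda>t. P t (y t)) differentiable (at t)" if "x1 < t" "t < x2" for t
  proof -
    have "t \<in> I" and "t \<in> {x1<..<x2}" using sub that by auto
    then show ?thesis using P_chain[OF _ y'] real_differentiable_def by blast
  qed
  ultimately obtain k t where t: "x1 < t" "t < x2"
    and k: "((\<lambda>t. P t (y t)) has_real_derivative k) (at t)"
    and mvt: "P x2 (y x2) - P x1 (y x1) = (x2 - x1) * k"
    using MVT[OF x(1)] by blast
  have tI: "t \<in> I" and t': "t \<in> {x1<..<x2}" using sub t by auto
  have k_eq: "k = PX t (y t) + PY t (y t) * deriv y t"
    using DERIV_unique[OF k P_chain[OF tI y'[OF t']]] .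
  \<comment> \<open>Q is constant along the curve, so its derivative there vanishes.\<close>
  have "((\<lambda>s. b) has_real_derivative QX t (y t) + QY t (y t) * deriv y t) (at t)"
    by (rule has_field_derivative_transform_within_open[OF Q_chain[OF tI y'[OF t']], of "{x1<..<x2}"])
      (use t level in auto)
  then have Q_slope: "QX t (y t) + QY t (y t) * deriv y t = 0"
    using DERIV_unique DERIV_const by blast
  have "k * QY t (y t) = jac t (y t) + PY t (y t) * (QX t (y t) + QY t (y t) * deriv y t)"
    unfolding k_eq jac_def by (simp add: algebra_simps)
  then have "k * QY t (y t) = jac t (y t)"
    unfolding Q_slope by simp
  with t' mvt show ?thesis using that by blast
qed

end

locale power_form_map_pos = power_form_map +
  assumes e'_pos: "\<And>x. x \<in> I \<Longrightarrow> 0 < e' x"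
begin

lemma jac_mult_a_neg:
  assumes x: "x \<in> I"
  shows "jac x y * a x < 0"
proof -
  have "continuous_on UNIV (jac x)"
    unfolding jac_def[abs_def] QX_def QY_def
    using PX_continuous[OF x] PY_continuous[OF x] by (intro continuous_intros)
  then have "0 < jac x y * jac x 0"
    using continuous_nonzero_imp_same_sign jac_nonzero[OF x] by blast
  moreover have "jac x 0 * a x = - ((a x * a x) * e' x)"
    by (simp add: jac_at_zero[OF x] algebra_simps)
  then have "jac x 0 * a x < 0"
    using a_nonzero[OF x] e'_pos[OF x]
    by (metis mult_pos_pos neg_less_0_iff_less not_real_square_gt_zero)
  ultimately show ?thesis
    by (metis mult_less_0_iff order_less_not_sym zero_less_mult_iff)
qed

lemma QT_dx_pos:
  assumes x: "x \<in> I" and T: "0 \<le> T"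
  shows "0 < QT_dx x T"
proof -
  define y where "y = root m T / a x"
  have T_eq: "(a x * y) ^ m = T"
    using a_nonzero[OF x] m_pos T by (simp add: y_def)
  have "(jac x y + jac x (- y)) * a x < 0"
    using jac_mult_a_neg[OF x, of y] jac_mult_a_neg[OF x, of "- y"] by (simp add: distrib_right)
  then have "0 < (a x * a x) * QT_dx x T"
    unfolding jac_reflect_sum[OF x] T_eq by (simp add: algebra_simps)
  then show ?thesis
    using a_nonzero[OF x] by (simp add: zero_less_mult_iff)
qed

lemma QT_strict_mono:
  assumes "x1 \<in> I" "x2 \<in> I" "x1 < x2" "0 \<le> T"
  shows "QT x1 T < QT x2 T"
proof (rule DERIV_pos_imp_increasing[OF \<open>x1 < x2\<close>])
  fix x assume "x1 \<le> x" "x \<le> x2"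
  then have "x \<in> I" using interval_segment_subset[OF interval assms(1,2)] by auto
  then show "\<exists>D. ((\<lambda>s. QT s T) has_real_derivative D) (at x) \<and> 0 < D"
    using QT_deriv QT_dx_pos assms(4) by blast
qed

lemma QT_inj: "x1 \<in> I \<Longrightarrow> x2 \<in> I \<Longrightarrow> 0 \<le> T \<Longrightarrow> QT x1 T = QT x2 T \<Longrightarrow> x1 = x2"
  using QT_strict_mono by (metis linorder_neqE_linordered_idom less_irrefl)

lemma P_strict_mono_vertical:
  assumes x: "x \<in> I" and c0: "c x = 0" and s: "a x * y1 < a x * y2"
  shows "P x y1 < P x y2"
proof -
  have PY_pos: "0 < PY x y * a x" for y
  proof -
    have "QT_dx x ((a x * y) ^ m) = QX x y"
      using c0 a_nonzero[OF x] by (simp add: QT_dx_def QX_def power_mult_distrib field_simps)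
    then have "0 < QX x y"
      using QT_dx_pos[OF x zero_le_even_power[OF m_even, of "a x * y"]] by simp
    moreover have "jac x y = - PY x y * QX x y"
      using c0 by (simp add: jac_def QY_def)
    ultimately show ?thesis
      using jac_mult_a_neg[OF x, of y] by (auto simp: mult_less_0_iff zero_less_mult_iff)
  qed
  have "P x (a x * y1 / a x) < P x (a x * y2 / a x)"
  proof (rule DERIV_pos_imp_increasing[OF s])
    fix s
    have "((\<lambda>s. P x (s / a x)) has_real_derivative PY x (s / a x) * (1 / a x)) (at s)"
      by (rule P_chain_snd[OF x]) (auto intro!: derivative_eq_intros simp: a_nonzero[OF x])
    moreover have "0 < PY x (s / a x) * (1 / a x)"
      using PY_pos[of "s / a x"] a_nonzero[OF x]
      by (auto simp: zero_less_mult_iff zero_less_divide_iff)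
    ultimately show "\<exists>D. ((\<lambda>s. P x (s / a x)) has_real_derivative D) (at s) \<and> 0 < D"
      by blast
  qed
  then show ?thesis
    using a_nonzero[OF x] by simp
qed

lemma QT_bounds_on_level_segment:
  assumes x: "x1 < x2" "x1 \<in> I" "x2 \<in> I" and T: "0 \<le> T1" "0 \<le> T2"
    and level: "QT x1 T1 = QT x2 T2" and t: "t \<in> {x1..x2}"
  shows "t \<noteq> x1 \<Longrightarrow> QT x1 T1 < QT t T1" and "QT x1 T1 \<le> QT t T1"
    and "t \<noteq> x2 \<Longrightarrow> QT t T2 < QT x1 T1" and "QT t T2 \<le> QT x1 T1"
proof -
  have tI: "t \<in> I" using interval_segment_subset[OF interval x(2,3)] t by auto
  show upper: "QT x1 T1 < QT t T1" if "t \<noteq> x1"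
    using QT_strict_mono[OF x(2) tI _ T(1)] t that by auto
  show lower: "QT t T2 < QT x1 T1" if "t \<noteq> x2"
    using QT_strict_mono[OF tI x(3) _ T(2)] t that level by auto
  show "QT x1 T1 \<le> QT t T1" using upper by (cases "t = x1") auto
  show "QT t T2 \<le> QT x1 T1" using lower level by (cases "t = x2") auto
qed

lemma lead_sign_on_level_segment:
  assumes x: "x1 < x2" "x1 \<in> I" "x2 \<in> I" and T: "0 \<le> T1" "0 \<le> T2"
    and level: "QT x1 T1 = QT x2 T2" and t: "t \<in> {x1..x2}"
  shows "lead t * (T2 - T1) < 0"
proof -
  have "QT t T2 < QT t T1"
    using QT_bounds_on_level_segment[OF assms] x(1) by (cases "t = x1") fastforce+
  then show ?thesis by (simp add: QT_def algebra_simps)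
qed

lemma level_T_on_level_segment:
  assumes x: "x1 < x2" "x1 \<in> I" "x2 \<in> I" and T: "0 \<le> T1" "0 \<le> T2"
    and level: "QT x1 T1 = QT x2 T2" and t: "t \<in> {x1..x2}"
  shows "0 \<le> level_T (QT x1 T1) t" and "t \<in> {x1<..<x2} \<Longrightarrow> 0 < level_T (QT x1 T1) t"
proof -
  let ?\<tau> = "level_T (QT x1 T1) t"
  have lead: "lead t * (T2 - T1) < 0"
    using lead_sign_on_level_segment[OF assms] .
  then have "QT t ?\<tau> = QT x1 T1"
    by (intro QT_level_T) auto
  then have "lead t * (?\<tau> - T1) = QT x1 T1 - QT t T1" and "lead t * (?\<tau> - T2) = QT x1 T1 - QT t T2"
    by (simp_all add: QT_def algebra_simps)
  note bounds = QT_bounds_on_level_segment[OF assms] this lead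
  \<comment> \<open>QT t is affine with slope lead t, and QT x1 T1 lies between QT t T2 and QT t T1.\<close>
  show "0 \<le> ?\<tau>"
    using bounds(2,4,5,6,7) T by (smt (verit, best) mult_less_0_iff zero_less_mult_iff)
  show "0 < ?\<tau>" if "t \<in> {x1<..<x2}"
    using bounds(1,3,5,6,7) that T
    by (smt (verit) greaterThanLessThan_iff mult_less_0_iff zero_less_mult_iff)
qed

lemma level_slope_sign:
  assumes t: "t \<in> I" and k: "k * QY t y = jac t y" and y: "y \<noteq> 0"
  shows "k * lead t * (a t * y) < 0"
proof -
  obtain n where n: "m = Suc n" using m_pos by (cases m) auto
  have "QY t y * y = real m * lead t * (a t * y) ^ m"
    using a_nonzero[OF t] unfolding QY_def lead_def by (simp add: n power_mult_distrib field_simps)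
  then have k': "k * (real m * lead t * (a t * y) ^ m) = jac t y * y"
    using k by (metis mult.assoc)
  have "(k * lead t * (a t * y)) * (real m * (a t * y) ^ m)
      = (k * (real m * lead t * (a t * y) ^ m)) * (a t * y)"
    by (simp add: algebra_simps)
  also have "\<dots> = (jac t y * a t) * (y * y)"
    unfolding k' by (simp add: algebra_simps)
  moreover have "(jac t y * a t) * (y * y) < 0"
    using jac_mult_a_neg[OF t, of y] y not_real_square_gt_zero[of y] mult_neg_pos by blast
  moreover have "0 < real m * (a t * y) ^ m"
    using m_pos m_even a_nonzero[OF t] y by (simp add: zero_less_power_eq)
  ultimately show ?thesis
    by (metis mult_less_0_iff not_less_iff_gr_or_eq zero_less_mult_iff)
qed

lemma level_curve_through:
  assumes x: "x1 < x2" "x1 \<in> I" "x2 \<in> I" and level: "Q x1 y1 = Q x2 y2"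
    and \<epsilon>: "\<epsilon> = 1 \<or> \<epsilon> = -1" and u: "0 \<le> \<epsilon> * (a x1 * y1)" "0 \<le> \<epsilon> * (a x2 * y2)"
  obtains y where "continuous_on {x1..x2} y" and "\<And>t. t \<in> {x1<..<x2} \<Longrightarrow> y differentiable (at t)"
    and "\<And>t. t \<in> {x1..x2} \<Longrightarrow> Q t (y t) = Q x1 y1" and "y x1 = y1" and "y x2 = y2"
    and "\<And>t. t \<in> {x1<..<x2} \<Longrightarrow> 0 < \<epsilon> * (a t * y t)"
proof -
  have \<epsilon>\<epsilon>: "\<epsilon> * \<epsilon> = 1" and \<epsilon>_pow: "\<epsilon> ^ m = 1"
    using \<epsilon> m_even by auto
  define T1 T2 where "T1 = (\<epsilon> * (a x1 * y1)) ^ m" and "T2 = (\<epsilon> * (a x2 * y2)) ^ m"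
  have T: "0 \<le> T1" "0 \<le> T2" using u by (simp_all add: T1_def T2_def)
  have QT_level: "QT x1 T1 = QT x2 T2" and Q_level: "Q x1 y1 = QT x1 T1"
    using level Q_eq_QT[OF x(2)] Q_eq_QT[OF x(3)] \<epsilon>_pow
    by (simp_all add: T1_def T2_def power_mult_distrib)
  define y where "y = level_curve \<epsilon> (QT x1 T1)"
  have sub: "{x1..x2} \<subseteq> I" using interval_segment_subset[OF interval x(2,3)] .
  have lead: "lead t \<noteq> 0" if "t \<in> {x1..x2}" for t
    using lead_sign_on_level_segment[OF x T QT_level that] by auto
  note level_T = level_T_on_level_segment[OF x T QT_level]
  show ?thesis
  proof (rule that[of y])
    have "level_T (QT x1 T1) x1 = T1" and "level_T (QT x1 T1) x2 = T2"
      using level_T_QT[OF lead, of x1 T1] level_T_QT[OF lead, of x2 T2] x(1)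
      by (simp_all add: QT_level)
    then show "y x1 = y1" and "y x2 = y2"
      using u \<epsilon>\<epsilon> m_pos a_nonzero[OF x(2)] a_nonzero[OF x(3)]
      by (simp_all add: y_def level_curve_def T1_def T2_def real_root_power_cancel)
    show "Q t (y t) = Q x1 y1" if "t \<in> {x1..x2}" for t
      using Q_level_curve[OF _ lead[OF that] level_T(1)[OF that] \<epsilon>_pow] sub that Q_level
      by (auto simp: y_def)
    show "continuous_on {x1..x2} y"
      using isCont_level_curve lead sub by (auto intro!: continuous_at_imp_continuous_on simp: y_def)
    show "y differentiable (at t)" if "t \<in> {x1<..<x2}" for t
    proof -
      have "t \<in> I" and "t \<in> {x1..x2}" using sub that by auto
      then show ?thesis
        using level_curve_differentiable[OF _ lead level_T(2)] that by (simp add: y_def)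
    qed
    show "0 < \<epsilon> * (a t * y t)" if "t \<in> {x1<..<x2}" for t
    proof -
      have "t \<in> I" and "t \<in> {x1..x2}" using sub that by auto
      then have "\<epsilon> * (a t * y t) = root m (level_T (QT x1 T1) t)"
        using a_mult_level_curve \<epsilon>\<epsilon> by (simp add: y_def mult.assoc[symmetric])
      then show ?thesis
        using real_root_gt_zero[OF m_pos level_T(2)[OF \<open>t \<in> {x1..x2}\<close> that]] by simp
    qed
  qed
qed

lemma P_increasing_along_level_curve:
  assumes x: "x1 < x2" "x1 \<in> I" "x2 \<in> I" and level: "Q x1 y1 = Q x2 y2"
    and same_sign: "0 \<le> (a x1 * y1) * (a x2 * y2)" and ne: "a x1 * y1 \<noteq> a x2 * y2"
  shows "0 < (a x2 * y2 - a x1 * y1) * (P x2 y2 - P x1 y1)"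
proof -
  define s1 s2 where "s1 = a x1 * y1" and "s2 = a x2 * y2"
  obtain \<epsilon> where \<epsilon>: "\<epsilon> = 1 \<or> \<epsilon> = -1" and u: "0 \<le> \<epsilon> * s1" "0 \<le> \<epsilon> * s2"
    using common_sign same_sign unfolding s1_def s2_def by blast
  obtain y where "continuous_on {x1..x2} y" and "\<And>t. t \<in> {x1<..<x2} \<Longrightarrow> y differentiable (at t)"
    and "\<And>t. t \<in> {x1..x2} \<Longrightarrow> Q t (y t) = Q x1 y1" and y_ends: "y x1 = y1" "y x2 = y2"
    and y_sign: "\<And>t. t \<in> {x1<..<x2} \<Longrightarrow> 0 < \<epsilon> * (a t * y t)"
    using level_curve_through[OF x level \<epsilon>] u unfolding s1_def s2_def by blast
  then obtain t k where t: "t \<in> {x1<..<x2}" and mvt: "P x2 y2 - P x1 y1 = (x2 - x1) * k"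
    and slope: "k * QY t (y t) = jac t (y t)"
    using level_curve_mvt[OF x] by metis
  have tI: "t \<in> I" using interval_segment_subset[OF interval x(2,3)] t by auto
  have "y t \<noteq> 0" using y_sign[OF t] by auto
  then have "k * lead t * (a t * y t) < 0"
    using level_slope_sign[OF tI slope] by simp
  then have "k * lead t * \<epsilon> < 0"
    using y_sign[OF t] by (smt (verit, best) mult_le_0_iff mult_less_0_iff)
  moreover have "lead t * (s2 ^ m - s1 ^ m) < 0"
  proof (rule lead_sign_on_level_segment[OF x])
    show "0 \<le> s1 ^ m" and "0 \<le> s2 ^ m" using m_even by (simp_all add: zero_le_even_power)
    show "QT x1 (s1 ^ m) = QT x2 (s2 ^ m)" using level Q_eq_QT x by (simp add: s1_def s2_def)
    show "t \<in> {x1..x2}" using t by auto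
  qed
  ultimately have "0 < k * \<epsilon> * (s2 ^ m - s1 ^ m)"
    by (smt (verit, best) zero_le_mult_iff zero_less_mult_iff)
  moreover have "0 < (s2 ^ m - s1 ^ m) * (\<epsilon> * s2 - \<epsilon> * s1)"
    using power_diff_mult_diff_pos[OF u _ m_pos] ne \<epsilon> m_even
    by (auto simp: s1_def s2_def power_mult_distrib)
  ultimately have "0 < k * (s2 - s1)"
    using \<epsilon> by (smt (verit, best) mult_less_cancel_left_disj zero_le_mult_iff zero_less_mult_iff)
  then show ?thesis
    using mvt x(1) unfolding s1_def s2_def
    by (metis zero_less_mult_iff diff_gt_0_iff_gt mult_less_0_iff)
qed

lemma P_strict_mono_on_level_set_same_sign:
  assumes x: "x1 \<in> I" "x2 \<in> I" and level: "Q x1 y1 = Q x2 y2"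
    and same_sign: "0 \<le> (a x1 * y1) * (a x2 * y2)" and lt: "a x1 * y1 < a x2 * y2"
  shows "P x1 y1 < P x2 y2"
proof (cases x1 x2 rule: linorder_cases)
  case less
  then show ?thesis
    using P_increasing_along_level_curve[OF less x level same_sign] lt
    by (simp add: zero_less_mult_iff)
next
  case greater
  have "0 < (a x1 * y1 - a x2 * y2) * (P x1 y1 - P x2 y2)"
    using P_increasing_along_level_curve[OF greater x(2,1) level[symmetric]] same_sign lt
    by (simp add: mult.commute)
  then show ?thesis
    using lt by (simp add: zero_less_mult_iff)
next
  case equal
  define s1 s2 where "s1 = a x1 * y1" and "s2 = a x1 * y2"
  obtain \<epsilon> where \<epsilon>: "\<epsilon> = 1 \<or> \<epsilon> = -1" and u: "0 \<le> \<epsilon> * s1" "0 \<le> \<epsilon> * s2"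
    using common_sign same_sign equal unfolding s1_def s2_def by blast
  have "\<epsilon> * s1 \<noteq> \<epsilon> * s2" using lt equal \<epsilon> unfolding s1_def s2_def by auto
  then have "(\<epsilon> * s1) ^ m \<noteq> (\<epsilon> * s2) ^ m"
    using power_diff_mult_diff_pos[OF u _ m_pos] by fastforce
  then have powers: "s1 ^ m \<noteq> s2 ^ m"
    using \<epsilon> m_even by (auto simp: power_mult_distrib)
  have "QT x1 (s1 ^ m) = QT x1 (s2 ^ m)"
    using level equal Q_eq_QT[OF x(1)] by (simp add: s1_def s2_def)
  then have "lead x1 * (s1 ^ m - s2 ^ m) = 0"
    by (simp add: QT_def algebra_simps)
  then have "c x1 = 0"
    using powers a_nonzero[OF x(1)] by (simp add: lead_def)
  then show ?thesis
    using P_strict_mono_vertical[OF x(1)] lt equal by simp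
qed

lemma P_strict_mono_on_level_set:
  assumes x: "x1 \<in> I" "x2 \<in> I" and level: "Q x1 y1 = Q x2 y2" and lt: "a x1 * y1 < a x2 * y2"
  shows "P x1 y1 < P x2 y2"
proof (cases "0 \<le> (a x1 * y1) * (a x2 * y2)")
  case True
  then show ?thesis using P_strict_mono_on_level_set_same_sign[OF x level _ lt] by blast
next
  case False
  then have opposite: "(a x1 * y1) * (a x2 * y2) \<le> 0" by simp
  have s1: "a x1 * y1 < 0" and s2: "0 < a x2 * y2"
    using False lt by (smt (verit) mult_less_0_iff)+
  \<comment> \<open>The reflection y \<mapsto> -y preserves Q and moves a point to the other side of the axis.\<close>
  consider "- (a x1 * y1) < a x2 * y2" | "a x2 * y2 < - (a x1 * y1)" | "- (a x1 * y1) = a x2 * y2"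
    by linarith
  then show ?thesis
  proof cases
    case 1
    have "P x1 (- y1) < P x2 y2"
      using P_strict_mono_on_level_set_same_sign[OF x, of "- y1" y2] 1 opposite level Q_reflect
      by simp
    then show ?thesis
      using P_reflect[of x1 y1] s1 by simp
  next
    case 2
    have "P x1 y1 < P x2 (- y2)"
      using P_strict_mono_on_level_set_same_sign[OF x, of y1 "- y2"] 2 opposite level Q_reflect
      by simp
    then show ?thesis
      using P_reflect[of x2 y2] s2 by simp
  next
    case 3
    then have "(a x1 * y1) ^ m = (a x2 * y2) ^ m"
      using m_even by (metis power_minus_even)
    then have "QT x1 ((a x1 * y1) ^ m) = QT x2 ((a x1 * y1) ^ m)"
      using level Q_eq_QT x by simp
    then have "x1 = x2"
      using QT_inj[OF x zero_le_even_power[OF m_even]] by blast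
    then have "y1 = - y2"
      using 3 a_nonzero[OF x(1)] by (metis mult_minus_right mult_cancel_left add.inverse_inverse)
    then show ?thesis
      using P_reflect[of x2 y2] s2 \<open>x1 = x2\<close> by (simp add: mult.commute)
  qed
qed

lemma inj_on_P_Q_normalized: "inj_on (\<lambda>z. (P (fst z) (snd z), Q (fst z) (snd z))) (I \<times> UNIV)"
proof (rule inj_onI, clarsimp)
  fix x1 y1 x2 y2
  assume x: "x1 \<in> I" "x2 \<in> I" and P: "P x1 y1 = P x2 y2" and Q: "Q x1 y1 = Q x2 y2"
  have s: "a x1 * y1 = a x2 * y2"
    using P_strict_mono_on_level_set[OF x Q] P_strict_mono_on_level_set[OF x(2,1) Q[symmetric]] P
    by (metis less_irrefl linorder_neqE_linordered_idom)
  then have "QT x1 ((a x1 * y1) ^ m) = QT x2 ((a x1 * y1) ^ m)"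
    using Q Q_eq_QT x by simp
  then have "x1 = x2"
    using QT_inj[OF x zero_le_even_power[OF m_even]] by blast
  then show "x1 = x2 \<and> y1 = y2"
    using s a_nonzero[OF x(1)] by simp
qed

end

context power_form_map
begin

theorem inj_on_P_Q:
  assumes "open I"
  shows "inj_on (\<lambda>z. (P (fst z) (snd z), Q (fst z) (snd z))) (I \<times> UNIV)"
  using DERIV_nonzero_imp_constant_sign[OF assms interval e_deriv e'_nonzero]
proof
  assume "\<forall>x\<in>I. 0 < e' x"
  then interpret power_form_map_pos I m P PX PY a c c' e e'
    by unfold_locales blast
  show ?thesis by (rule inj_on_P_Q_normalized)
next
  assume "\<forall>x\<in>I. e' x < 0"
  \<comment> \<open>Replacing Q by -Q changes the sign of e' and of the Jacobian.\<close>
  then interpret neg: power_form_map_pos I m P PX PY a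
    "\<lambda>x. - c x" "\<lambda>x. - c' x" "\<lambda>x. - e x" "\<lambda>x. - e' x"
  proof unfold_locales
    fix x y assume x: "x \<in> I"
    show "((\<lambda>x. - c x) has_real_derivative - c' x) (at x)" using c_deriv[OF x] by (rule DERIV_minus)
    show "((\<lambda>x. - e x) has_real_derivative - e' x) (at x)" using e_deriv[OF x] by (rule DERIV_minus)
    have "PX x y * (- c x * (real m * y ^ (m - 1))) - PY x y * (- c' x * y ^ m + - e' x)
        = - (PX x y * (c x * (real m * y ^ (m - 1))) - PY x y * (c' x * y ^ m + e' x))"
      by (simp add: algebra_simps)
    then show "PX x y * (- c x * (real m * y ^ (m - 1))) - PY x y * (- c' x * y ^ m + - e' x) \<noteq> 0"
      using jacobian_nonzero[OF x, of y] by simp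
  qed (use interval m_even m_pos P_has_derivative PX_continuous PY_continuous P_reflect a_nonzero in auto)
  have "inj_on ((\<lambda>(u, v). (u, - v)) \<circ> (\<lambda>z. (P (fst z) (snd z), Q (fst z) (snd z)))) (I \<times> UNIV)"
    using neg.inj_on_P_Q_normalized by (simp add: o_def neg.Q_def Q_def)
  then show ?thesis by (rule inj_on_imageI2)
qed

end

lemma real_analytic2_on_differentiable_fst:
  assumes "real_analytic2_on f S" and "(a, b) \<in> S"
  shows "(\<lambda>s. f (s, b)) differentiable (at a)"
proof -
  obtain r c where r: "r > 0" and series: "\<And>x y. dist (x, y) (a, b) < r \<Longrightarrow>
      ((\<lambda>(i, j). c i j * (x - a) ^ i * (y - b) ^ j) has_sum f (x, y)) UNIV"
    using assms unfolding real_analytic2_on_def by fast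
  have row: "((\<lambda>i. c i 0 * z ^ i) has_sum f (a + z, b)) UNIV" if "norm z < r" for z
  proof -
    define G where "G = (\<lambda>(i, j). c i j * (a + z - a) ^ i * (b - b) ^ j)"
    have "dist (a + z, b) (a, b) < r"
      using that by (simp add: dist_Pair_Pair dist_real_def)
    then have "(G has_sum f (a + z, b)) UNIV"
      using series[of "a + z" b] by (simp add: G_def)
    then have "(G has_sum f (a + z, b)) (range (\<lambda>i. (i, 0::nat)))"
      by (subst (asm) has_sum_cong_neutral[where T = "range (\<lambda>i. (i, 0::nat))" and g = G])
        (auto simp: G_def)
    then have "((G \<circ> (\<lambda>i. (i, 0::nat))) has_sum f (a + z, b)) UNIV"
      by (subst (asm) has_sum_reindex) (auto simp: inj_on_def)
    then show ?thesis by (simp add: G_def o_def)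
  qed
  define g where "g z = (\<Sum>i. c i 0 * z ^ i)" for z :: real
  have g: "f (a + z, b) = g z" and summable: "summable (\<lambda>i. c i 0 * z ^ i)" if "norm z < r" for z
    using has_sum_imp_sums[OF row[OF that]] unfolding g_def by (simp_all add: sums_iff)
  have "(g has_real_derivative (\<Sum>i. diffs (\<lambda>i. c i 0) i * 0 ^ i)) (at 0)"
    unfolding g_def by (rule termdiffs_strong'[of r]) (use summable r in auto)
  then obtain g' where "(g has_real_derivative g') (at 0)" ..
  then have "((\<lambda>s. g (s - a)) has_real_derivative g') (at a)"
    using DERIV_chain'[OF DERIV_diff[OF DERIV_ident DERIV_const, of a a], of g] by simp
  then have "((\<lambda>s. f (s, b)) has_real_derivative g') (at a)"
  proof (rule has_field_derivative_transform_within_open[where S = "ball a r"])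
    fix s assume "s \<in> ball a r"
    then show "g (s - a) = f (s, b)"
      using g[of "s - a"] by (simp add: dist_real_def abs_minus_commute)
  qed (use r in auto)
  then show ?thesis unfolding real_differentiable_def by blast
qed

lemma coeff_differentiable_of_poly_family:
  fixes \<pi> :: "real \<Rightarrow> real poly"
  assumes "infinite Z" and "\<And>x. degree (\<pi> x) \<le> n"
    and "\<And>z. z \<in> Z \<Longrightarrow> (\<lambda>x. poly (\<pi> x) z) differentiable (at x0)"
  shows "(\<lambda>x. coeff (\<pi> x) k) differentiable (at x0)"
  using assms
proof (induction n arbitrary: \<pi> Z k)
  case 0
  obtain z where z: "z \<in> Z" using infinite_imp_nonempty[OF "0.prems"(1)] by blast
  have "coeff (\<pi> x) k = (if k = 0 then poly (\<pi> x) z else 0)" for x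
    using "0.prems"(2)[of x] by (auto simp: poly_altdef coeff_eq_0)
  then show ?case using "0.prems"(3)[OF z] by (cases "k = 0") simp_all
next
  case (Suc n)
  obtain z0 where z0: "z0 \<in> Z" using infinite_imp_nonempty[OF Suc.prems(1)] by blast
  \<comment> \<open>Dividing out the root z0 lowers the degree and keeps differentiable evaluations.\<close>
  define \<sigma> where "\<sigma> x = synthetic_div (\<pi> x) z0" for x
  have decomp: "\<pi> x = [:-z0, 1:] * \<sigma> x + [:poly (\<pi> x) z0:]" for x
    unfolding \<sigma>_def by (rule synthetic_div_correct'[symmetric])
  have \<sigma>_eval: "poly (\<sigma> x) z = (poly (\<pi> x) z - poly (\<pi> x) z0) / (z - z0)" if "z \<noteq> z0" for x z
  proof -
    have "poly (\<pi> x) z = (z - z0) * poly (\<sigma> x) z + poly (\<pi> x) z0"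
      by (subst decomp) (simp add: algebra_simps)
    then show ?thesis using that by (simp add: field_simps)
  qed
  have \<sigma>_coeff: "(\<lambda>x. coeff (\<sigma> x) j) differentiable (at x0)" for j
  proof (rule Suc.IH[of "Z - {z0}"])
    show "infinite (Z - {z0})" using Suc.prems(1) by simp
    show "degree (\<sigma> x) \<le> n" for x
      using Suc.prems(2)[of x] by (simp add: \<sigma>_def degree_synthetic_div)
    fix z assume "z \<in> Z - {z0}"
    then have "z \<in> Z" and "z \<noteq> z0" by auto
    then show "(\<lambda>x. poly (\<sigma> x) z) differentiable (at x0)"
      unfolding \<sigma>_eval[OF \<open>z \<noteq> z0\<close>] using Suc.prems(3) z0 by (auto intro!: derivative_intros)
  qed
  have "(\<lambda>x. coeff (\<pi> x) k) = (\<lambda>x. - z0 * coeff (\<sigma> x) k +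
      (case k of 0 \<Rightarrow> poly (\<pi> x) z0 | Suc j \<Rightarrow> coeff (\<sigma> x) j))"
    by (subst decomp) (cases k; simp)
  then show ?case
    using \<sigma>_coeff Suc.prems(3)[OF z0] by (cases k) (auto intro!: derivative_intros)
qed

lemma coeff_differentiable_of_sum_differentiable:
  fixes c :: "nat \<Rightarrow> real \<Rightarrow> real"
  assumes "finite K" and "k \<in> K"
    and "\<And>y. (\<lambda>x. \<Sum>j\<in>K. c j x * y ^ j) differentiable (at x0)"
  shows "c k differentiable (at x0)"
proof -
  define \<pi> where "\<pi> x = (\<Sum>j\<in>K. monom (c j x) j)" for x
  have "(\<lambda>x. coeff (\<pi> x) k) differentiable (at x0)"
  proof (rule coeff_differentiable_of_poly_family)
    show "infinite (UNIV :: real set)" by (rule infinite_UNIV_char_0)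
    show "degree (\<pi> x) \<le> Max K" for x
      unfolding \<pi>_def using assms(1)
      by (intro degree_sum_le) (auto intro: order.trans[OF degree_monom_le] Max_ge)
    show "(\<lambda>x. poly (\<pi> x) y) differentiable (at x0)" for y
      using assms(3)[of y] by (simp add: \<pi>_def poly_sum poly_monom)
  qed
  moreover have "coeff (\<pi> x) k = c k x" for x
    using assms(1,2) by (simp add: \<pi>_def coeff_sum coeff_monom)
  ultimately show ?thesis by simp
qed

lemma real_analytic2_on_coeff_differentiable:
  fixes c :: "nat \<Rightarrow> real \<Rightarrow> real"
  assumes "real_analytic2_on f S" and "finite K" and "k \<in> K" and "{x} \<times> UNIV \<subseteq> S"
    and "\<And>s y. f (s, y) = (\<Sum>j\<in>K. c j s * y ^ j)"
  shows "c k differentiable (at x)"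
proof (rule coeff_differentiable_of_sum_differentiable[OF assms(2,3)])
  fix y
  show "(\<lambda>s. \<Sum>j\<in>K. c j s * y ^ j) differentiable (at x)"
    using real_analytic2_on_differentiable_fst[OF assms(1), of x y] assms(4,5) by auto
qed

lemma has_derivative_coeff_sum:
  fixes c :: "nat \<Rightarrow> real \<Rightarrow> real"
  assumes "\<And>k. k \<in> K \<Longrightarrow> (c k has_real_derivative c' k) (at x)"
  shows "((\<lambda>z. \<Sum>k\<in>K. c k (fst z) * snd z ^ k) has_derivative
      (\<lambda>d. (\<Sum>k\<in>K. c' k * y ^ k) * fst d + (\<Sum>k\<in>K. c k x * (real k * y ^ (k - 1))) * snd d))
    (at (x, y))"
proof -
  have "((\<lambda>z. c k (fst z) * snd z ^ k) has_derivative
      (\<lambda>d. c' k * y ^ k * fst d + c k x * (real k * y ^ (k - 1)) * snd d)) (at (x, y))" if "k \<in> K" for k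
    using assms[OF that]
    by (auto intro!: derivative_eq_intros DERIV_compose_FDERIV simp: algebra_simps)
  then have "((\<lambda>z. \<Sum>k\<in>K. c k (fst z) * snd z ^ k) has_derivative
      (\<lambda>d. \<Sum>k\<in>K. c' k * y ^ k * fst d + c k x * (real k * y ^ (k - 1)) * snd d)) (at (x, y))"
    by (rule has_derivative_sum)
  then show ?thesis
    by (rule has_derivative_eq_rhs) (simp add: fun_eq_iff sum.distrib sum_distrib_right)
qed

lemma jac_det_power_form:
  assumes F: "\<And>x y. F (x, y) = (P x y, c x * y ^ m + e x)"
    and P: "((\<lambda>z. P (fst z) (snd z)) has_derivative (\<lambda>d. PX * fst d + PY * snd d)) (at (x, y))"
    and c: "(c has_real_derivative c') (at x)" and e: "(e has_real_derivative e') (at x)"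
  shows "jac_det F x y = PX * (c x * (real m * y ^ (m - 1))) - PY * (c' * y ^ m + e')"
proof -
  have "deriv (\<lambda>s. P s y) x = PX"
    using has_real_derivative_compose_pair[of P PX PY "\<lambda>s. s" x "\<lambda>_. y" 1 0] P
    by (intro DERIV_imp_deriv) simp
  moreover have "deriv (\<lambda>t. P x t) y = PY"
    using has_real_derivative_compose_pair[of P PX PY "\<lambda>_. x" y "\<lambda>t. t" 0 1] P
    by (intro DERIV_imp_deriv) simp
  moreover have "deriv (\<lambda>s. c s * y ^ m + e s) x = c' * y ^ m + e'"
    using c e by (intro DERIV_imp_deriv) (auto intro!: derivative_eq_intros)
  moreover have "deriv (\<lambda>t. c x * t ^ m + e x) y = c x * (real m * y ^ (m - 1))"
    by (intro DERIV_imp_deriv) (auto intro!: derivative_eq_intros)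
  ultimately show ?thesis
    by (simp add: jac_det_def F)
qed

lemma sum_power_reflect:
  fixes p :: "nat \<Rightarrow> real"
  assumes "finite K" and "1 \<in> K" and "\<And>k. k \<in> K \<Longrightarrow> k \<noteq> 1 \<Longrightarrow> even k"
  shows "(\<Sum>k\<in>K. p k * (- y) ^ k) = (\<Sum>k\<in>K. p k * y ^ k) - 2 * p 1 * y"
proof -
  have "(\<Sum>k\<in>K - {1}. p k * (- y) ^ k) = (\<Sum>k\<in>K - {1}. p k * y ^ k)"
    using assms(3) by (intro sum.cong) auto
  then show ?thesis
    using assms(1,2) by (simp add: sum.remove[of K 1])
qed

text \<open>Analyticity enters only through the differentiability of the coefficients.\<close>

theorem inj_on_nonsingular_power_form:
  fixes F :: "real \<times> real \<Rightarrow> real \<times> real" and p :: "nat \<Rightarrow> real \<Rightarrow> real"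
  assumes I: "open I" "is_interval I" and m: "even m" "0 < m"
    and K: "finite K" "1 \<in> K" "\<And>k. k \<in> K \<Longrightarrow> k \<noteq> 1 \<Longrightarrow> even k"
    and F: "\<And>x y. F (x, y) = ((\<Sum>k\<in>K. p k x * y ^ k), c x * y ^ m + e x)"
    and p_diff: "\<And>k x. k \<in> K \<Longrightarrow> x \<in> I \<Longrightarrow> p k differentiable (at x)"
    and c_diff: "\<And>x. x \<in> I \<Longrightarrow> c differentiable (at x)"
    and e_diff: "\<And>x. x \<in> I \<Longrightarrow> e differentiable (at x)"
    and nonsingular: "\<And>x y. x \<in> I \<Longrightarrow> jac_det F x y \<noteq> 0"
    and p1: "\<And>x. x \<in> I \<Longrightarrow> p 1 x \<noteq> 0"
  shows "inj_on F (I \<times> UNIV)"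
proof -
  define P where "P x y = (\<Sum>k\<in>K. p k x * y ^ k)" for x y
  define PX where "PX x y = (\<Sum>k\<in>K. deriv (p k) x * y ^ k)" for x y
  define PY where "PY x y = (\<Sum>k\<in>K. p k x * (real k * y ^ (k - 1)))" for x y
  have P_deriv: "((\<lambda>z. P (fst z) (snd z)) has_derivative (\<lambda>d. PX x y * fst d + PY x y * snd d))
      (at (x, y))" if "x \<in> I" for x y
    unfolding P_def PX_def PY_def using p_diff that
    by (intro has_derivative_coeff_sum) (simp add: DERIV_deriv_iff_real_differentiable)
  have pair: "power_form_map I m P PX PY (p 1) c (deriv c) e (deriv e)"
  proof
    fix x y assume x: "x \<in> I"
    show "(c has_real_derivative deriv c x) (at x)" "(e has_real_derivative deriv e x) (at x)"
      using c_diff[OF x] e_diff[OF x] by (simp_all add: DERIV_deriv_iff_real_differentiable)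
    then show "PX x y * (c x * (real m * y ^ (m - 1)))
        - PY x y * (deriv c x * y ^ m + deriv e x) \<noteq> 0"
      using nonsingular[OF x, of y] jac_det_power_form[OF _ P_deriv[OF x]] F by (simp add: P_def)
    show "continuous_on UNIV (PX x)" "continuous_on UNIV (PY x)"
      unfolding PX_def PY_def by (intro continuous_intros)+
  qed (use I m P_deriv p1 sum_power_reflect[OF K] in \<open>simp_all add: P_def\<close>)
  then have "inj_on (\<lambda>z. (P (fst z) (snd z), power_form_map.Q m c e (fst z) (snd z))) (I \<times> UNIV)"
    using power_form_map.inj_on_P_Q I(1) by blast
  moreover have "F = (\<lambda>z. (P (fst z) (snd z), power_form_map.Q m c e (fst z) (snd z)))"
    using F by (simp add: fun_eq_iff P_def power_form_map.Q_def[OF pair])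
  ultimately show ?thesis by simp
qed

lemma lacunary_sum_eq:
  assumes "1 \<le> h"
  shows "(\<Sum>l = 1..L. p (2 * h * l) * y ^ (2 * h * l)) + p 1 * y + p 0
    = (\<Sum>k\<in>insert 0 (insert 1 ((\<lambda>l. 2 * h * l) ` {1..L})). p k * (y :: real) ^ k)"
proof -
  have "inj_on (\<lambda>l. 2 * h * l) {1..L}" using assms by (auto simp: inj_on_def)
  moreover have "2 \<le> 2 * h * l" if "l \<in> {1..L}" for l
    using assms that by (simp add: Suc_le_eq)
  then have "0 \<notin> (\<lambda>l. 2 * h * l) ` {1..L}" and "1 \<notin> (\<lambda>l. 2 * h * l) ` {1..L}"
    by fastforce+
  ultimately show ?thesis by (simp add: sum.reindex)
qed

theorem theorem3:
  fixes I :: "real set" and h L :: nat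
    and p q :: "nat \<Rightarrow> real \<Rightarrow> real"
    and F :: "real \<times> real \<Rightarrow> real \<times> real"
  assumes I_open: "open I" and I_interval: "is_interval I"
    and h: "h \<ge> 1" and L: "L \<ge> 1"
    and F_def: "\<And>x y. F (x, y) =
        ((\<Sum>l = 1..L. p (2 * h * l) x * y ^ (2 * h * l)) + p 1 x * y + p 0 x,
         q (2 * h) x * y ^ (2 * h) + q 0 x)"
    and F_analytic: "real_analytic_map_on F (I \<times> UNIV)"
    and nonsingular: "\<forall>x \<in> I. \<forall>y. jac_det F x y \<noteq> 0"
    and p1: "\<forall>x \<in> I. p 1 x \<noteq> 0"
  shows "inj_on F (I \<times> UNIV)"
proof -
  define K where "K = insert 0 (insert 1 ((\<lambda>l. 2 * h * l) ` {1..L}))"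
  have K: "finite K" "1 \<in> K" "\<And>k. k \<in> K \<Longrightarrow> k \<noteq> 1 \<Longrightarrow> even k"
    by (auto simp: K_def)
  have P_sum: "fst (F (x, y)) = (\<Sum>k\<in>K. p k x * y ^ k)" for x y
    using lacunary_sum_eq[OF h] by (simp add: F_def K_def)
  have Q_sum: "snd (F (x, y)) = (\<Sum>k\<in>{0, 2 * h}. q k x * y ^ k)" for x y
    using h by (simp add: F_def)
  have p_diff: "p k differentiable (at x)" if "k \<in> K" "x \<in> I" for k x
    using F_analytic K(1) that P_sum unfolding real_analytic_map_on_def
    by (intro real_analytic2_on_coeff_differentiable[where f = "\<lambda>z. fst (F z)" and K = K]) auto
  have q_diff: "q k differentiable (at x)" if "k \<in> {0, 2 * h}" "x \<in> I" for k x
    using F_analytic that Q_sum unfolding real_analytic_map_on_def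
    by (intro real_analytic2_on_coeff_differentiable[where f = "\<lambda>z. snd (F z)"]) auto
  show ?thesis
  proof (rule inj_on_nonsingular_power_form[OF I_open I_interval _ _ K])
    show "even (2 * h)" and "0 < 2 * h" using h by auto
    show "F (x, y) = ((\<Sum>k\<in>K. p k x * y ^ k), q (2 * h) x * y ^ (2 * h) + q 0 x)" for x y
      by (rule prod_eqI) (simp only: P_sum fst_conv, simp add: F_def)
    show "p k differentiable (at x)" if "k \<in> K" and "x \<in> I" for k x
      using p_diff that .
    show "q (2 * h) differentiable (at x)" and "q 0 differentiable (at x)" if "x \<in> I" for x
      using q_diff that by auto
    show "jac_det F x y \<noteq> 0" and "p 1 x \<noteq> 0" if "x \<in> I" for x y
      using nonsingular p1 that by auto
  qed
qed

end
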